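(* For any integer $k\ge2$: (a) The set $\{a\in[\frac12,\frac23]:\varkappa_a\ge k\}$ is a finite union of closed non-degenerate intervals. On each of these intervals the functions $a\mapsto T_a^1(0),\dots,a\mapsto T_a^k(0)$ are strictly decreasing and continuous, and $a\mapsto\delta_1,\dots,a\mapsto\delta_{k-1}$ are constant. (b) The set $\{a\in[\frac12,\frac23]:\varkappa_a=k\}$ is the union of all (pairwise disjoint) open intervals $(a'',a')$ such that $T_{a''}^k(0)=1$ and $T_{a'}^k(0)=\frac{2a'-1}{1-a'}$.
   Context: For $a\in[\frac12,\frac23]$ let $I_a=\big(\frac{2a-1}{1-a},1\big)$ and define $T_a$ on $[0,\frac1{1-a}]\setminus I_a$ by $T_a(x)=\frac1a(x+1)$ for $0\le x\le\frac{2a-1}{1-a}$ and $T_a(x)=\frac1a(x-1)$ for $1\le x\le\frac1{1-a}$; for $a=\frac23$ set $T_{2/3}(1)=0$. Let $\varkappa_a=\inf\{k\ge0:T_a^k(0)\in I_a\}$ ($\inf\emptyset=\infty$) and, for $0\le k\le\varkappa_a$, $\delta_k=\delta_k(a)=\mathbb 1\{T_a^k(0)<1\}$. *)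

theory Defs
  imports "HOL-Analysis.Analysis" "HOL-Library.Extended_Nat"
begin

definition cI :: "real \<Rightarrow> real" where
  "cI a = (2*a - 1) / (1 - a)"

definition inI :: "real \<Rightarrow> real \<Rightarrow> bool" where
  "inI a x \<longleftrightarrow> cI a < x \<and> x < 1"

text \<open>On its domain [0,1/(1-a)] minus I_a this agrees with the paper:
  x \<le> (2a-1)/(1-a) < 1 (for a < 2/3) gives (x+1)/a, x \<ge> 1 gives (x-1)/a, and for a = 2/3
  the convention T(1) = 0 is the second branch. Outside the domain the value is irrelevant:
  only T_a^k(0) for k \<le> kappa_a is ever used.\<close>
definition T :: "real \<Rightarrow> real \<Rightarrow> real" where
  "T a x = (if x < 1 then (x + 1) / a else (x - 1) / a)"

definition orb :: "real \<Rightarrow> nat \<Rightarrow> real" where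
  "orb a k = (T a ^^ k) 0"

definition kappa :: "real \<Rightarrow> enat" where
  "kappa a = (if \<exists>k. inI a (orb a k) then enat (LEAST k. inI a (orb a k)) else \<infinity>)"

definition delta :: "real \<Rightarrow> nat \<Rightarrow> bool" where
  "delta a k \<longleftrightarrow> orb a k < 1"

end

theory Submission
  imports Defs
begin

text \<open>Fix an itinerary s and follow, for every parameter a, the branches of T_a that s
  prescribes. The resulting orbit points are continuous in a and, as long as they stay on the
  prescribed sides of the hole, nonnegative and strictly decreasing in a, while the left end
  (2a-1)/(1-a) of the hole increases. Hence the parameters realising s without entering the hole
  form a closed interval, a cell, and the cells of the itineraries of length k are disjoint and
  cover the set where kappa_a \<ge> k; by connectedness, every interval in that set lies in one cell.
  A cell is never a single point: it can only stop growing to the right where an orbit point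
  sits at 1 (or at a = 2/3), and to the left where one sits at (2a-1)/(1-a) (or at a = 1/2). But
  after hitting 1 the orbit returns to 0 and is periodic, after hitting (2a-1)/(1-a) it stays at
  the fixed point 1/(1-a), so both cannot happen; at a = 1/2 the orbit never hits 1, and at
  a = 2/3 it never hits (2a-1)/(1-a) = 1. Consequently, on a cell where kappa_a = k somewhere,
  T_a^k(0) is at least 1 at the left end and at most (2a-1)/(1-a) at the right end, and the
  intermediate value theorem produces the intervals of part (b); strict monotonicity makes
  them unique in each cell.\<close>

lemma cI_less_1: "a < 2/3 \<Longrightarrow> cI a < 1"
  by (simp add: cI_def field_simps)

lemma cI_two_thirds: "cI (2/3) = 1"
  by (simp add: cI_def)

lemma cI_mono: "a \<le> b \<Longrightarrow> b < 1 \<Longrightarrow> cI a \<le> cI b"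
  by (simp add: cI_def field_simps)

lemma isCont_cI: "a \<noteq> 1 \<Longrightarrow> isCont cI a"
  unfolding cI_def[abs_def] by (intro continuous_intros) auto

lemma orb_0 [simp]: "orb a 0 = 0"
  by (simp add: orb_def)

lemma orb_Suc: "orb a (Suc j) = T a (orb a j)"
  by (simp add: orb_def)

lemma orb_add: "orb a (m + n) = (T a ^^ m) (orb a n)"
  by (simp add: orb_def funpow_add)

lemma orb_half: "0 < j \<Longrightarrow> orb (1/2) j = 2"
proof -
  have "orb (1/2) (Suc i) = 2" for i
    by (induction i) (simp_all add: orb_Suc T_def)
  then show "0 < j \<Longrightarrow> orb (1/2) j = 2" by (metis gr0_conv_Suc)
qed

lemma orb_two_thirds_dyadic: "\<exists>n::int. orb (2/3) j = 3 * of_int n / 2^j"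
proof (induction j)
  case 0
  show ?case by (simp add: orb_def)
next
  case (Suc j)
  then obtain n :: int where n: "orb (2/3) j = 3 * of_int n / 2^j" by blast
  show ?case
  proof (cases "orb (2/3) j < 1")
    case True
    then have "orb (2/3) (Suc j) = 3 * of_int (3 * n + 2^j) / 2^Suc j"
      by (simp add: orb_Suc T_def n field_simps)
    then show ?thesis by blast
  next
    case False
    then have "orb (2/3) (Suc j) = 3 * of_int (3 * n - 2^j) / 2^Suc j"
      by (simp add: orb_Suc T_def n field_simps)
    then show ?thesis by blast
  qed
qed

lemma orb_two_thirds_neq_1: "orb (2/3) j \<noteq> 1"
proof
  assume "orb (2/3) j = 1"
  moreover obtain n :: int where "orb (2/3) j = 3 * of_int n / 2^j"
    using orb_two_thirds_dyadic by blast
  ultimately have "real_of_int (3 * n) = real_of_int (2^j)"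
    by (simp add: field_simps)
  then have "3 * n = 2^j" by (simp only: of_int_eq_iff)
  then have "(3::int) dvd 2^j" by (metis dvd_triv_left)
  then have "(3::int) dvd 2" using prime_dvd_power[of "3::int" 2 j] by simp
  then show False by simp
qed

lemma orb_add_period: "orb a p = 0 \<Longrightarrow> orb a (m + p) = orb a m"
  by (metis orb_add orb_def)

lemma orb_mod_period:
  assumes "orb a i = 1"
  shows "orb a m = orb a (m mod Suc i)"
proof -
  have "orb a (Suc i) = 0" using assms by (simp add: orb_Suc T_def)
  then have "orb a (q * Suc i + r) = orb a r" for q r
  proof (induction q)
    case (Suc q)
    have "Suc q * Suc i + r = (q * Suc i + r) + Suc i" by simp
    then show ?case using Suc orb_add_period by metis
  qed simp
  from this[of "m div Suc i" "m mod Suc i"] show ?thesis by (simp only: div_mult_mod_eq)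
qed

text \<open>The right branch maps the fixed point 1/(1-a) to itself, and the left branch maps
  (2a-1)/(1-a) to it.\<close>
lemma orb_after_cI:
  assumes "0 < a" "a < 2/3" "orb a j = cI a" "j < m"
  shows "orb a m = 1 / (1 - a)"
  using assms(4)
proof (induction m)
  case 0
  then show ?case by simp
next
  case (Suc m)
  show ?case
  proof (cases "j = m")
    case True
    then have "orb a (Suc m) = (cI a + 1) / a"
      using assms(3) cI_less_1[OF assms(2)] by (simp add: orb_Suc T_def)
    also have "\<dots> = 1 / (1 - a)"
      using assms(1,2) by (simp add: cI_def field_simps)
    finally show ?thesis .
  next
    case False
    moreover have "1 \<le> 1 / (1 - a)" using assms(1,2) by simp
    ultimately have "orb a (Suc m) = (1 / (1 - a) - 1) / a"
      using Suc by (simp add: orb_Suc T_def)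
    also have "\<dots> = 1 / (1 - a)" using assms(1,2) by (simp add: field_simps)
    finally show ?thesis .
  qed
qed

lemma orb_not_hits_both:
  assumes "a \<in> {1/2..2/3}" "orb a i = 1" "orb a j = cI a"
  shows False
proof (cases "a = 2/3")
  case True
  then show False using assms(3) orb_two_thirds_neq_1 cI_two_thirds by metis
next
  case False
  then have a: "0 < a" "a < 2/3" using assms(1) by auto
  have "orb a (Suc j * Suc i) = 0"
    using orb_mod_period[OF assms(2), of "Suc j * Suc i"] by (metis mod_mult_self2_is_0 orb_0)
  moreover have "orb a (Suc j * Suc i) = 1 / (1 - a)"
    using orb_after_cI[OF a assms(3)] by simp
  ultimately show False using a by simp
qed

lemma enat_le_kappa_iff: "enat k \<le> kappa a \<longleftrightarrow> (\<forall>j<k. \<not> inI a (orb a j))"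
proof (cases "\<exists>j. inI a (orb a j)")
  case True
  then have "kappa a = enat (LEAST j. inI a (orb a j))" by (simp add: kappa_def)
  then show ?thesis using True
    by (metis enat_ord_simps(1) LeastI_ex not_less_Least not_le order.strict_trans2)
qed (simp add: kappa_def)

lemma kappa_eq_enat_iff: "kappa a = enat k \<longleftrightarrow> (\<forall>j<k. \<not> inI a (orb a j)) \<and> inI a (orb a k)"
proof
  assume h: "kappa a = enat k"
  then have ex: "\<exists>j. inI a (orb a j)" by (auto simp: kappa_def split: if_splits)
  then have "(LEAST j. inI a (orb a j)) = k" using h by (simp add: kappa_def)
  then show "(\<forall>j<k. \<not> inI a (orb a j)) \<and> inI a (orb a k)"
    using LeastI_ex[OF ex] not_less_Least by metis
next
  assume h: "(\<forall>j<k. \<not> inI a (orb a j)) \<and> inI a (orb a k)"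
  then have "(LEAST j. inI a (orb a j)) = k"
    by (intro Least_equality) (auto simp: not_less[symmetric])
  then show "kappa a = enat k" using h by (auto simp: kappa_def)
qed

text \<open>Itineraries are coded like delta: s!j means that the j-th orbit point is left of the
  hole. branch_orb follows the branches prescribed by s wherever the points actually lie, so it
  is a rational function of a.\<close>
fun branch_orb :: "bool list \<Rightarrow> real \<Rightarrow> nat \<Rightarrow> real" where
  "branch_orb s a 0 = 0"
| "branch_orb s a (Suc j) =
     (if s!j then (branch_orb s a j + 1) / a else (branch_orb s a j - 1) / a)"

definition on_branch :: "bool list \<Rightarrow> real \<Rightarrow> nat \<Rightarrow> bool" where
  "on_branch s a j \<longleftrightarrow> (if s!j then branch_orb s a j \<le> cI a else 1 \<le> branch_orb s a j)"

definition cell :: "bool list \<Rightarrow> real set" where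
  "cell s = {a \<in> {1/2..2/3}. \<forall>j<length s. on_branch s a j}"

definition itinerary :: "real \<Rightarrow> nat \<Rightarrow> bool list" where
  "itinerary a n = map (delta a) [0..<n]"

lemma length_itinerary [simp]: "length (itinerary a n) = n"
  by (simp add: itinerary_def)

lemma branch_orb_eq_orb: "(\<forall>i<j. s!i = delta a i) \<Longrightarrow> branch_orb s a j = orb a j"
  by (induction j) (auto simp: orb_Suc T_def delta_def)

lemma on_branch_iff:
  assumes "a \<in> {1/2..2/3}" "branch_orb s a j = orb a j"
  shows "on_branch s a j \<longleftrightarrow> \<not> inI a (orb a j) \<and> s!j = delta a j"
proof -
  have "orb a j < 1" if "orb a j \<le> cI a"
  proof (cases "a = 2/3")
    case True
    then show ?thesis using that cI_two_thirds orb_two_thirds_neq_1[of j] by fastforce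
  next
    case False
    then show ?thesis using that assms(1) cI_less_1[of a] by auto
  qed
  then show ?thesis using assms(2) by (auto simp: on_branch_def inI_def delta_def)
qed

lemma on_branch_prefix_iff:
  assumes "a \<in> {1/2..2/3}"
  shows "(\<forall>j<n. on_branch s a j) \<longleftrightarrow> (\<forall>j<n. \<not> inI a (orb a j) \<and> s!j = delta a j)"
proof (induction n)
  case (Suc n)
  have "(\<forall>j<n. on_branch s a j) \<Longrightarrow> branch_orb s a n = orb a n"
    using Suc.IH by (auto intro: branch_orb_eq_orb)
  moreover have "(\<forall>j<n. \<not> inI a (orb a j) \<and> s!j = delta a j) \<Longrightarrow> branch_orb s a n = orb a n"
    by (auto intro: branch_orb_eq_orb)
  ultimately show ?case using Suc.IH on_branch_iff[OF assms] by (auto simp: less_Suc_eq)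
qed simp

lemma mem_cell_iff:
  "a \<in> cell s \<longleftrightarrow>
     a \<in> {1/2..2/3} \<and> (\<forall>j<length s. \<not> inI a (orb a j)) \<and> itinerary a (length s) = s"
proof (cases "a \<in> {1/2..2/3}")
  case True
  have "a \<in> cell s \<longleftrightarrow> (\<forall>j<length s. on_branch s a j)"
    using True by (simp add: cell_def)
  also have "\<dots> \<longleftrightarrow> (\<forall>j<length s. \<not> inI a (orb a j) \<and> s!j = delta a j)"
    by (rule on_branch_prefix_iff[OF True])
  also have "\<dots> \<longleftrightarrow> (\<forall>j<length s. \<not> inI a (orb a j)) \<and> itinerary a (length s) = s"
    unfolding itinerary_def list_eq_iff_nth_eq by auto
  finally show ?thesis using True by blast
qed (auto simp: cell_def)

lemma delta_on_cell:
  assumes "a \<in> cell s" "j < length s"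
  shows "delta a j = s!j"
proof -
  have "itinerary a (length s) = s" using assms(1) by (simp add: mem_cell_iff)
  moreover have "itinerary a (length s) ! j = delta a j" using assms(2) by (simp add: itinerary_def)
  ultimately show ?thesis by simp
qed

lemma orb_eq_branch_orb_on_cell:
  assumes "a \<in> cell s" "j \<le> length s"
  shows "orb a j = branch_orb s a j"
proof -
  have "\<forall>i<j. s!i = delta a i" using assms delta_on_cell by fastforce
  then show ?thesis by (simp add: branch_orb_eq_orb)
qed

lemma kappa_ge_eq_Union_cells:
  "{a \<in> {1/2..2/3}. enat k \<le> kappa a} = (\<Union>s\<in>{s. length s = k}. cell s)"
  by (auto simp: enat_le_kappa_iff mem_cell_iff itinerary_def)

lemma cell_subset_kappa_ge: "cell s \<subseteq> {a \<in> {1/2..2/3}. enat (length s) \<le> kappa a}"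
  by (auto simp: mem_cell_iff enat_le_kappa_iff)

lemma cells_disjoint: "length s = length t \<Longrightarrow> s \<noteq> t \<Longrightarrow> cell s \<inter> cell t = {}"
  by (auto simp: mem_cell_iff)

lemma branch_orb_nonneg:
  "0 < a \<Longrightarrow> \<forall>i<j. on_branch s a i \<Longrightarrow> 0 \<le> branch_orb s a j"
  by (induction j) (auto simp: on_branch_def)

lemma branch_orb_antimono:
  assumes "0 < a" "a \<le> b" "\<forall>i<j. on_branch s b i"
  shows "branch_orb s b j \<le> branch_orb s a j"
  using assms(3)
proof (induction j)
  case (Suc j)
  then have IH: "branch_orb s b j \<le> branch_orb s a j" and ob: "on_branch s b j"
    by simp_all
  have nonneg: "0 \<le> branch_orb s b j" using Suc.prems assms(1,2) branch_orb_nonneg by simp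
  show ?case
  proof (cases "s!j")
    case True
    have "(branch_orb s b j + 1) / b \<le> (branch_orb s b j + 1) / a"
      using assms(1,2) nonneg by (intro divide_left_mono) auto
    also have "\<dots> \<le> (branch_orb s a j + 1) / a"
      using assms(1) IH by (intro divide_right_mono) auto
    finally show ?thesis using True by simp
  next
    case False
    have "(branch_orb s b j - 1) / b \<le> (branch_orb s b j - 1) / a"
      using assms(1,2) ob False by (intro divide_left_mono) (auto simp: on_branch_def)
    also have "\<dots> \<le> (branch_orb s a j - 1) / a"
      using assms(1) IH by (intro divide_right_mono) auto
    finally show ?thesis using False by simp
  qed
qed simp

lemma branch_orb_strict_antimono:
  assumes "0 < a" "a < b" "0 < j" "\<forall>i<j. on_branch s b i"
  shows "branch_orb s b j < branch_orb s a j"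
  using assms(3,4)
proof (induction j)
  case (Suc j)
  have ob: "on_branch s b j" and pre: "\<forall>i<j. on_branch s b i" using Suc.prems by simp_all
  show ?case
  proof (cases "s!j")
    case True
    have "(branch_orb s b j + 1) / b < (branch_orb s b j + 1) / a"
      using assms(1,2) branch_orb_nonneg[OF _ pre] by (intro divide_strict_left_mono) auto
    also have "\<dots> \<le> (branch_orb s a j + 1) / a"
      using assms(1,2) branch_orb_antimono[OF _ _ pre] by (intro divide_right_mono) auto
    finally show ?thesis using True by simp
  next
    case False
    then have "0 < j" using ob by (cases j) (auto simp: on_branch_def)
    then have "(branch_orb s b j - 1) / a < (branch_orb s a j - 1) / a"
      using assms(1) Suc.IH pre by (intro divide_strict_right_mono) auto
    also have "(branch_orb s b j - 1) / b \<le> (branch_orb s b j - 1) / a"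
      using assms(1,2) ob False by (intro divide_left_mono) (auto simp: on_branch_def)
    ultimately show ?thesis using False by simp
  qed
qed simp

lemma isCont_branch_orb: "a \<noteq> 0 \<Longrightarrow> isCont (\<lambda>a. branch_orb s a j) a"
proof (induction j)
  case (Suc j)
  then show ?case by (cases "s!j") (auto intro!: continuous_intros)
qed simp

lemma closed_cell: "closed (cell s)"
proof -
  let ?D = "{1/2..2/3::real}"
  have orb_cont: "continuous_on ?D (\<lambda>a. branch_orb s a j)" for j
    by (intro continuous_at_imp_continuous_on ballI isCont_branch_orb) auto
  have cI_cont: "continuous_on ?D cI"
    by (intro continuous_at_imp_continuous_on ballI isCont_cI) auto
  have "closed {a \<in> ?D. on_branch s a j}" for j
    using continuous_on_closed_Collect_le[OF orb_cont cI_cont closed_atLeastAtMost]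
      continuous_on_closed_Collect_le[OF continuous_on_const orb_cont closed_atLeastAtMost]
    by (cases "s!j") (simp_all only: on_branch_def if_True if_False)
  then have "closed (?D \<inter> (\<Inter>j<length s. {a \<in> ?D. on_branch s a j}))" by auto
  also have "?D \<inter> (\<Inter>j<length s. {a \<in> ?D. on_branch s a j}) = cell s"
    by (auto simp: cell_def)
  finally show ?thesis .
qed

text \<open>Moving a to the right only pushes the orbit points further to the left, so only the
  conditions \<open>1 \<le> branch_orb s a j\<close> need checking; symmetrically to the left.\<close>
lemma mem_cell_right:
  assumes "p \<in> cell s" "p \<le> a" "a \<le> 2/3" "\<forall>j<length s. \<not> s!j \<longrightarrow> 1 \<le> branch_orb s a j"
  shows "a \<in> cell s"
proof -
  have p: "1/2 \<le> p" "\<forall>j<length s. on_branch s p j" using assms(1) by (auto simp: cell_def)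
  have "\<forall>i<j. on_branch s a i" if "j \<le> length s" for j
    using that
  proof (induction j)
    case (Suc j)
    then have pre: "\<forall>i<j. on_branch s a i" by simp
    have "branch_orb s a j \<le> cI a" if "s!j"
    proof -
      have "branch_orb s a j \<le> branch_orb s p j"
        using p assms(2) pre by (intro branch_orb_antimono) auto
      also have "\<dots> \<le> cI p" using p Suc.prems that by (auto simp: on_branch_def)
      also have "\<dots> \<le> cI a" using assms(2,3) by (intro cI_mono) auto
      finally show ?thesis .
    qed
    then have "on_branch s a j" using assms(4) Suc.prems by (auto simp: on_branch_def)
    then show ?case using pre by (auto simp: less_Suc_eq)
  qed simp
  then show ?thesis using p assms(2,3) by (auto simp: cell_def)
qed

lemma mem_cell_left:
  assumes "p \<in> cell s" "a \<le> p" "1/2 \<le> a" "\<forall>j<length s. s!j \<longrightarrow> branch_orb s a j \<le> cI a"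
  shows "a \<in> cell s"
proof -
  have p: "p \<le> 2/3" "\<forall>j<length s. on_branch s p j" using assms(1) by (auto simp: cell_def)
  have "1 \<le> branch_orb s a j" if "j < length s" "\<not> s!j" for j
  proof -
    have "1 \<le> branch_orb s p j" using p that by (auto simp: on_branch_def)
    also have "\<dots> \<le> branch_orb s a j"
      using p assms(2,3) that by (intro branch_orb_antimono) auto
    finally show ?thesis .
  qed
  then show ?thesis using assms p by (auto simp: cell_def on_branch_def)
qed

lemma atLeastAtMost_subset_cell: "a \<in> cell s \<Longrightarrow> c \<in> cell s \<Longrightarrow> {a..c} \<subseteq> cell s"
proof
  fix b assume a: "a \<in> cell s" and c: "c \<in> cell s" and "b \<in> {a..c}"
  then have b: "a \<le> b" "b \<le> c" and c': "c \<le> 2/3" "\<forall>j<length s. on_branch s c j"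
    by (auto simp: cell_def)
  show "b \<in> cell s"
  proof (rule mem_cell_right[OF a b(1)])
    show "b \<le> 2/3" using b c' by simp
    show "\<forall>j<length s. \<not> s!j \<longrightarrow> 1 \<le> branch_orb s b j"
    proof (intro allI impI)
      fix j assume j: "j < length s" "\<not> s!j"
      then have "1 \<le> branch_orb s c j" using c' by (auto simp: on_branch_def)
      also have "\<dots> \<le> branch_orb s b j"
        using a b c' j by (intro branch_orb_antimono) (auto simp: cell_def)
      finally show "1 \<le> branch_orb s b j" .
    qed
  qed
qed

lemma eventually_ball_less:
  fixes f g :: "'i \<Rightarrow> 'a::t2_space \<Rightarrow> real"
  assumes "finite I" and "\<And>i. i \<in> I \<Longrightarrow> isCont (f i) x \<and> isCont (g i) x \<and> f i x < g i x"
  shows "\<forall>\<^sub>F y in at x. \<forall>i\<in>I. f i y < g i y"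
proof (rule eventually_ball_finite[OF assms(1)], intro ballI)
  fix i assume i: "i \<in> I"
  have "((\<lambda>y. g i y - f i y) \<longlongrightarrow> g i x - f i x) (at x)"
    using assms(2)[OF i] by (intro tendsto_diff isContD) auto
  moreover have "0 < g i x - f i x" using assms(2)[OF i] by simp
  ultimately have "\<forall>\<^sub>F y in at x. 0 < g i y - f i y" by (rule order_tendstoD(1))
  then show "\<forall>\<^sub>F y in at x. f i y < g i y" by simp
qed

definition right_slack :: "bool list \<Rightarrow> real \<Rightarrow> bool" where
  "right_slack s a \<longleftrightarrow> (\<forall>j<length s. \<not> s!j \<longrightarrow> 1 < branch_orb s a j)"

definition left_slack :: "bool list \<Rightarrow> real \<Rightarrow> bool" where
  "left_slack s a \<longleftrightarrow> (\<forall>j<length s. s!j \<longrightarrow> branch_orb s a j < cI a)"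

lemma cell_extends_right:
  assumes "p \<in> cell s" "right_slack s p" "p < 2/3"
  shows "\<exists>a\<in>cell s. p < a"
proof -
  have "0 < p" using assms(1) by (auto simp: cell_def)
  then have "\<forall>\<^sub>F a in at p. \<forall>j\<in>{j. j < length s \<and> \<not> s!j}. 1 < branch_orb s a j"
    using assms(2) by (intro eventually_ball_less) (auto simp: right_slack_def isCont_branch_orb)
  then obtain d where "0 < d"
    and d: "\<And>a. a \<noteq> p \<Longrightarrow> dist a p < d \<Longrightarrow> \<forall>j<length s. \<not> s!j \<longrightarrow> 1 < branch_orb s a j"
    by (auto simp: eventually_at)
  define a where "a = min (p + d/2) (2/3)"
  have a: "p < a" "a \<le> 2/3" "dist a p < d"
    using \<open>0 < d\<close> assms(3) by (auto simp: a_def dist_real_def min_def max_def)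
  have "a \<in> cell s"
    using d[of a] a by (intro mem_cell_right[OF assms(1)]) auto
  with a show ?thesis by blast
qed

lemma cell_extends_left:
  assumes "p \<in> cell s" "left_slack s p" "1/2 < p"
  shows "\<exists>a\<in>cell s. a < p"
proof -
  have "0 < p" "p \<noteq> 1" using assms(1) by (auto simp: cell_def)
  then have "\<forall>\<^sub>F a in at p. \<forall>j\<in>{j. j < length s \<and> s!j}. branch_orb s a j < cI a"
    using assms(2) by (intro eventually_ball_less) (auto simp: left_slack_def isCont_branch_orb isCont_cI)
  then obtain d where "0 < d"
    and d: "\<And>a. a \<noteq> p \<Longrightarrow> dist a p < d \<Longrightarrow> \<forall>j<length s. s!j \<longrightarrow> branch_orb s a j < cI a"
    by (auto simp: eventually_at)
  define a where "a = max (p - d/2) (1/2)"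
  have a: "a < p" "1/2 \<le> a" "dist a p < d"
    using \<open>0 < d\<close> assms(3) by (auto simp: a_def dist_real_def min_def max_def)
  have "a \<in> cell s"
    using d[of a] a by (intro mem_cell_left[OF assms(1)]) auto
  with a show ?thesis by blast
qed

lemma orb_hits_1_if_not_right_slack:
  assumes "p \<in> cell s" "\<not> right_slack s p"
  shows "\<exists>j<length s. orb p j = 1"
proof -
  obtain j where j: "j < length s" "\<not> s!j" "\<not> 1 < branch_orb s p j"
    using assms(2) by (auto simp: right_slack_def)
  moreover have "on_branch s p j" using assms(1) j(1) by (simp add: cell_def)
  ultimately show ?thesis using orb_eq_branch_orb_on_cell[OF assms(1)]
    by (auto simp: on_branch_def)
qed

lemma orb_hits_cI_if_not_left_slack:
  assumes "p \<in> cell s" "\<not> left_slack s p"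
  shows "\<exists>j<length s. orb p j = cI p"
proof -
  obtain j where j: "j < length s" "s!j" "\<not> branch_orb s p j < cI p"
    using assms(2) by (auto simp: left_slack_def)
  moreover have "on_branch s p j" using assms(1) j(1) by (simp add: cell_def)
  ultimately show ?thesis using orb_eq_branch_orb_on_cell[OF assms(1)]
    by (auto simp: on_branch_def)
qed

lemma cell_not_singleton:
  assumes "p \<in> cell s"
  shows "\<exists>q\<in>cell s. q \<noteq> p"
proof -
  have right: ?thesis if "right_slack s p" "p < 2/3"
    using cell_extends_right[OF assms that] by (metis less_irrefl)
  have left: ?thesis if "left_slack s p" "1/2 < p"
    using cell_extends_left[OF assms that] by (metis less_irrefl)
  have "1/2 \<le> p" "p \<le> 2/3" using assms by (auto simp: cell_def)
  then consider "p = 1/2" | "p = 2/3" | "1/2 < p" "p < 2/3" by linarith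
  then show ?thesis
  proof cases
    case 1
    have "orb (1/2) j \<noteq> 1" for j by (cases "j = 0") (simp_all add: orb_half)
    then have "right_slack s p" using orb_hits_1_if_not_right_slack[OF assms] 1 by metis
    moreover have "p < 2/3" using 1 by simp
    ultimately show ?thesis using right by blast
  next
    case 2
    then have "left_slack s p"
      using orb_hits_cI_if_not_left_slack[OF assms] orb_two_thirds_neq_1 cI_two_thirds by metis
    moreover have "1/2 < p" using 2 by simp
    ultimately show ?thesis using left by blast
  next
    case 3
    have "left_slack s p \<or> right_slack s p"
    proof (rule ccontr)
      assume "\<not> ?thesis"
      then obtain i j where "orb p i = 1" "orb p j = cI p"
        using orb_hits_cI_if_not_left_slack[OF assms] orb_hits_1_if_not_right_slack[OF assms]
        by blast
      then show False using orb_not_hits_both[of p i j] 3 by simp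
    qed
    then show ?thesis using left right 3 by blast
  qed
qed

lemma bdd_cell: "bdd_below (cell s)" "bdd_above (cell s)"
  by (auto simp: cell_def intro: bdd_belowI[of _ "1/2"] bdd_aboveI[of _ "2/3"])

lemma Inf_Sup_mem_cell:
  assumes "cell s \<noteq> {}"
  shows "Inf (cell s) \<in> cell s" "Sup (cell s) \<in> cell s"
  using closed_contains_Inf[OF assms bdd_cell(1) closed_cell]
    closed_contains_Sup[OF assms bdd_cell(2) closed_cell] by auto

lemma atLeastAtMost_Inf_Sup_cell:
  assumes "cell s \<noteq> {}"
  shows "{Inf (cell s)..Sup (cell s)} = cell s"
proof
  show "cell s \<subseteq> {Inf (cell s)..Sup (cell s)}"
    using cInf_lower[OF _ bdd_cell(1)] cSup_upper[OF _ bdd_cell(2)] by auto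
  show "{Inf (cell s)..Sup (cell s)} \<subseteq> cell s"
    by (rule atLeastAtMost_subset_cell[OF Inf_Sup_mem_cell[OF assms]])
qed

lemma Inf_cell_less_Sup:
  assumes "cell s \<noteq> {}"
  shows "Inf (cell s) < Sup (cell s)"
proof -
  obtain q where "q \<in> cell s" "q \<noteq> Inf (cell s)"
    using cell_not_singleton[OF Inf_Sup_mem_cell(1)[OF assms]] by blast
  moreover have "Inf (cell s) \<le> q" "q \<le> Sup (cell s)"
    using cInf_lower[OF \<open>q \<in> cell s\<close> bdd_cell(1)] cSup_upper[OF \<open>q \<in> cell s\<close> bdd_cell(2)]
    by auto
  ultimately show ?thesis using le_neq_trans by fastforce
qed

lemma strict_antimono_on_cell_orb:
  assumes "0 < j" "j \<le> length s"
  shows "strict_antimono_on (cell s) (\<lambda>a. orb a j)"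
  unfolding monotone_on_def
proof (intro ballI impI)
  fix a b assume ab: "a \<in> cell s" "b \<in> cell s" "a < b"
  then have "branch_orb s b j < branch_orb s a j"
    using assms by (intro branch_orb_strict_antimono) (auto simp: cell_def)
  then show "orb b j < orb a j"
    using ab(1,2) assms(2) by (simp add: orb_eq_branch_orb_on_cell)
qed

lemma continuous_on_cell_orb:
  assumes "j \<le> length s"
  shows "continuous_on (cell s) (\<lambda>a. orb a j)"
proof -
  have "continuous_on (cell s) (\<lambda>a. branch_orb s a j)"
    by (intro continuous_at_imp_continuous_on ballI isCont_branch_orb) (auto simp: cell_def)
  moreover have "continuous_on (cell s) (\<lambda>a. orb a j) = continuous_on (cell s) (\<lambda>a. branch_orb s a j)"
    using orb_eq_branch_orb_on_cell[OF _ assms] by (intro continuous_on_cong) auto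
  ultimately show ?thesis by simp
qed

lemma continuous_on_cell_cI: "continuous_on (cell s) cI"
  by (intro continuous_at_imp_continuous_on ballI isCont_cI) (auto simp: cell_def)

lemma orb_antimono_on_cell:
  assumes "a \<in> cell s" "b \<in> cell s" "a \<le> b" "j \<le> length s"
  shows "orb b j \<le> orb a j"
  using assms branch_orb_antimono[of a b j s] by (auto simp: cell_def orb_eq_branch_orb_on_cell)

lemma orb_Inf_cell_ge_1:
  assumes "cell s \<noteq> {}" "0 < length s"
  shows "1 \<le> orb (Inf (cell s)) (length s)"
proof -
  define l where "l = Inf (cell s)"
  have l: "l \<in> cell s" "1/2 \<le> l" "l < 2/3"
    using Inf_Sup_mem_cell[OF assms(1)] Inf_cell_less_Sup[OF assms(1)]
    by (auto simp: l_def cell_def)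
  show ?thesis
  proof (cases "l = 1/2")
    case True
    show ?thesis unfolding l_def[symmetric] using orb_half[OF assms(2)] by (simp add: True)
  next
    case False
    then have "1/2 < l" using l by simp
    moreover have "\<not> (\<exists>a\<in>cell s. a < l)"
      using cInf_lower[OF _ bdd_cell(1)] unfolding l_def by (meson not_le)
    ultimately have "\<not> left_slack s l" using cell_extends_left[OF l(1)] by blast
    then obtain j where "j < length s" "orb l j = cI l"
      using orb_hits_cI_if_not_left_slack[OF l(1)] by blast
    then have "orb l (length s) = 1 / (1 - l)" using orb_after_cI[of l j] l by simp
    moreover have "1 \<le> 1 / (1 - l)" using l by simp
    ultimately show ?thesis by (simp add: l_def)
  qed
qed

lemma orb_Sup_cell_le_cI:
  assumes "a \<in> cell s" "0 < length s" "orb a (length s) < 1"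
  shows "orb (Sup (cell s)) (length s) \<le> cI (Sup (cell s))"
proof -
  define r where "r = Sup (cell s)"
  have r: "r \<in> cell s" "a \<le> r"
    using Inf_Sup_mem_cell(2)[of s] cSup_upper[OF assms(1) bdd_cell(2)] assms(1)
    by (auto simp: r_def)
  have "orb r (length s) \<le> orb a (length s)"
    using orb_antimono_on_cell[OF assms(1) r order.refl] .
  then have below_1: "orb r (length s) < 1" using assms(3) by simp
  show ?thesis
  proof (cases "r = 2/3")
    case True
    show ?thesis unfolding r_def[symmetric] using below_1 by (simp add: True cI_two_thirds)
  next
    case False
    then have "r < 2/3" using r(1) by (simp add: cell_def)
    moreover have "\<not> (\<exists>b\<in>cell s. r < b)"
      using cSup_upper[OF _ bdd_cell(2)] unfolding r_def by (meson not_le)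
    ultimately have "\<not> right_slack s r" using cell_extends_right[OF r(1)] by blast
    then obtain i where i: "i < length s" "orb r i = 1"
      using orb_hits_1_if_not_right_slack[OF r(1)] by blast
    have "length s mod Suc i < length s"
      using i(1) mod_less_divisor[of "Suc i" "length s"] by linarith
    then have "\<not> inI r (orb r (length s mod Suc i))" using r(1) by (simp add: mem_cell_iff)
    then show ?thesis
      unfolding r_def[symmetric] using below_1 orb_mod_period[OF i(2), of "length s"]
      by (simp add: inI_def)
  qed
qed

lemma connected_subset_disjoint_closed_member:
  fixes S :: "'a::topological_space set"
  assumes "connected S" "finite \<F>" "\<And>C. C \<in> \<F> \<Longrightarrow> closed C" "pairwise disjnt \<F>"
    and "S \<subseteq> \<Union>\<F>" "C \<in> \<F>" "x \<in> S" "x \<in> C"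
  shows "S \<subseteq> C"
proof (rule ccontr)
  assume "\<not> S \<subseteq> C"
  define B where "B = \<Union>(\<F> - {C})"
  have "closed C" "closed B" using assms(2,3,6) by (auto simp: B_def intro: closed_Union)
  moreover have "S \<subseteq> C \<union> B" using assms(5) by (auto simp: B_def)
  moreover have "C \<inter> B \<inter> S = {}" using assms(4,6) by (auto simp: B_def pairwise_def disjnt_def)
  moreover have "C \<inter> S \<noteq> {}" using assms(7,8) by auto
  moreover have "B \<inter> S \<noteq> {}" using assms(5) \<open>\<not> S \<subseteq> C\<close> by (auto simp: B_def)
  ultimately show False using assms(1) unfolding connected_closed by blast
qed

lemma atLeastAtMost_subset_itinerary_cell:
  assumes "x \<le> y" "{x..y} \<subseteq> {a \<in> {1/2..2/3}. enat k \<le> kappa a}"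
  shows "{x..y} \<subseteq> cell (itinerary x k)"
proof (rule connected_subset_disjoint_closed_member)
  show "finite (cell ` {s. length s = k})"
    using finite_lists_length_eq[of "UNIV :: bool set" k] by simp
  show "pairwise disjnt (cell ` {s. length s = k})"
    using cells_disjoint by (fastforce simp: pairwise_def disjnt_def)
  show "{x..y} \<subseteq> \<Union>(cell ` {s. length s = k})"
    using assms(2) kappa_ge_eq_Union_cells by blast
  show "x \<in> cell (itinerary x k)"
    using assms by (auto simp: mem_cell_iff enat_le_kappa_iff)
qed (use assms(1) closed_cell in auto)

definition hole_intervals :: "nat \<Rightarrow> (real \<times> real) set" where
  "hole_intervals k = {(a'', a'). 1/2 \<le> a'' \<and> a'' < a' \<and> a' \<le> 2/3 \<and>
                  (\<forall>a \<in> {a''..a'}. enat k \<le> kappa a) \<and>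
                  orb a'' k = 1 \<and> orb a' k = cI a'}"

lemma hole_interval_subset_cell:
  "(x, y) \<in> hole_intervals k \<Longrightarrow> {x..y} \<subseteq> cell (itinerary x k)"
  by (intro atLeastAtMost_subset_itinerary_cell) (auto simp: hole_intervals_def)

lemma cell_crosses_hole:
  assumes "a \<in> cell s" "0 < length s" "inI a (orb a (length s))"
  obtains x y where "x < a" "a < y" "{x..y} \<subseteq> cell s"
    and "orb x (length s) = 1" "orb y (length s) = cI y"
proof -
  let ?n = "length s"
  define l r where "l = Inf (cell s)" and "r = Sup (cell s)"
  have a: "cI a < orb a ?n" "orb a ?n < 1" using assms(3) by (auto simp: inI_def)
  have ne: "cell s \<noteq> {}" using assms(1) by blast
  have lr: "l \<le> a" "a \<le> r" "cell s = {l..r}"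
    using cInf_lower[OF assms(1) bdd_cell(1)] cSup_upper[OF assms(1) bdd_cell(2)]
      atLeastAtMost_Inf_Sup_cell[OF ne] by (simp_all add: l_def r_def)
  then have sub: "{l..a} \<subseteq> cell s" "{a..r} \<subseteq> cell s" by auto
  have cont: "continuous_on (cell s) (\<lambda>b. orb b ?n)" by (rule continuous_on_cell_orb) simp
  have "1 \<le> orb l ?n" using orb_Inf_cell_ge_1[OF ne assms(2)] by (simp add: l_def)
  moreover have "continuous_on {l..a} (\<lambda>b. orb b ?n)"
    using continuous_on_subset[OF cont sub(1)] .
  ultimately obtain x where x: "l \<le> x" "x \<le> a" "orb x ?n = 1"
    using IVT2'[of "\<lambda>b. orb b ?n" a 1 l] lr(1) a(2) by auto
  have "orb r ?n \<le> cI r" using orb_Sup_cell_le_cI[OF assms(1,2) a(2)] by (simp add: r_def)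
  moreover have "continuous_on {a..r} (\<lambda>b. orb b ?n - cI b)"
    using continuous_on_subset[OF cont sub(2)] continuous_on_subset[OF continuous_on_cell_cI sub(2)]
    by (intro continuous_intros)
  ultimately obtain y where y: "a \<le> y" "y \<le> r" "orb y ?n - cI y = 0"
    using IVT2'[of "\<lambda>b. orb b ?n - cI b" r 0 a] lr(2) a(1) by auto
  have "x \<noteq> a" "a \<noteq> y" using x(3) y(3) a by auto
  then have "x < a" "a < y" using x(2) y(1) by simp_all
  moreover have "{x..y} \<subseteq> cell s" using x(1) y(2) lr(3) by auto
  ultimately show thesis using that x(3) y(3) by simp
qed

lemma kappa_eq_in_hole_interval:
  assumes "0 < k" "a \<in> {1/2..2/3}" "kappa a = enat k"
  shows "\<exists>(x, y) \<in> hole_intervals k. a \<in> {x<..<y}"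
proof -
  define s where "s = itinerary a k"
  have "a \<in> cell s" "inI a (orb a (length s))"
    using assms(2,3) by (auto simp: s_def mem_cell_iff kappa_eq_enat_iff)
  then obtain x y where xy: "x < a" "a < y" "{x..y} \<subseteq> cell s" "orb x k = 1" "orb y k = cI y"
    using cell_crosses_hole assms(1) by (metis length_itinerary s_def)
  have "cell s \<subseteq> {b \<in> {1/2..2/3}. enat k \<le> kappa b}"
    using cell_subset_kappa_ge[of s] by (simp add: s_def)
  with xy(3) have kappa_ge: "{x..y} \<subseteq> {b \<in> {1/2..2/3}. enat k \<le> kappa b}" by (rule order.trans)
  have "x \<in> {x..y}" "y \<in> {x..y}" using xy(1,2) by auto
  then have "1/2 \<le> x" "y \<le> 2/3" "\<forall>b\<in>{x..y}. enat k \<le> kappa b"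
    using subsetD[OF kappa_ge] by auto
  then have "(x, y) \<in> hole_intervals k"
    using xy by (simp add: hole_intervals_def)
  with xy(1,2) show ?thesis by auto
qed

lemma kappa_eq_on_hole_interval:
  assumes "0 < k" "(x, y) \<in> hole_intervals k" "a \<in> {x<..<y}"
  shows "a \<in> {1/2..2/3}" "kappa a = enat k"
proof -
  have xy: "orb x k = 1" "orb y k = cI y" "\<forall>b\<in>{x..y}. enat k \<le> kappa b" "y \<le> 2/3"
    using assms(2) by (auto simp: hole_intervals_def)
  have cell: "x \<in> cell (itinerary x k)" "y \<in> cell (itinerary x k)" "a \<in> cell (itinerary x k)"
    using hole_interval_subset_cell[OF assms(2)] assms(3) by auto
  then show "a \<in> {1/2..2/3}" by (simp add: cell_def)
  have mono: "strict_antimono_on (cell (itinerary x k)) (\<lambda>b. orb b k)"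
    using assms(1) by (intro strict_antimono_on_cell_orb) auto
  have "orb a k < 1" "orb y k < orb a k"
    using monotone_onD[OF mono cell(1) cell(3)] monotone_onD[OF mono cell(3) cell(2)] assms(3) xy(1)
    by auto
  moreover have "cI a \<le> cI y" using assms(3) xy(4) by (intro cI_mono) auto
  ultimately have "inI a (orb a k)" using xy(2) by (simp add: inI_def)
  moreover have "enat k \<le> kappa a" using xy(3) assms(3) by auto
  ultimately show "kappa a = enat k" by (simp add: kappa_eq_enat_iff enat_le_kappa_iff)
qed

lemma hole_intervals_disjoint:
  assumes "0 < k" "(x, y) \<in> hole_intervals k" "(x', y') \<in> hole_intervals k"
    and "{x<..<y} \<inter> {x'<..<y'} \<noteq> {}"
  shows "(x, y) = (x', y')"
proof -
  obtain z where "z \<in> {x<..<y} \<inter> {x'<..<y'}" using assms(4) by blast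
  then have z: "x < z" "z < y" "x' < z" "z < y'" by auto
  have "{min x x'..max y y'} \<subseteq> {x..y} \<union> {x'..y'}" using z by auto
  also have "\<dots> \<subseteq> {a \<in> {1/2..2/3}. enat k \<le> kappa a}"
    using assms(2,3) by (auto simp: hole_intervals_def)
  finally have "{min x x'..max y y'} \<subseteq> cell (itinerary (min x x') k)"
    using z by (intro atLeastAtMost_subset_itinerary_cell) auto
  then have cell: "{x, y, x', y'} \<subseteq> cell (itinerary (min x x') k)" using z by auto
  have mono: "strict_antimono_on (cell (itinerary (min x x') k)) (\<lambda>b. orb b k)"
    using assms(1) by (intro strict_antimono_on_cell_orb) auto
  have ends: "orb x k = 1" "orb x' k = 1" "orb y k = cI y" "orb y' k = cI y'" "y \<le> 2/3" "y' \<le> 2/3"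
    using assms(2,3) by (auto simp: hole_intervals_def)
  have "x = x'"
    using monotone_onD[OF mono, of x x'] monotone_onD[OF mono, of x' x] cell ends
    by (cases x x' rule: linorder_cases) auto
  moreover have "y = y'"
    using monotone_onD[OF mono, of y y'] monotone_onD[OF mono, of y' y] cell ends
      cI_mono[of y y'] cI_mono[of y' y]
    by (cases y y' rule: linorder_cases) auto
  ultimately show ?thesis by simp
qed

theorem lemma5p1:
  fixes k :: nat
  assumes "k \<ge> 2"
  shows
    "(\<exists>J :: (real \<times> real) set.
        finite J \<and>
        (\<forall>(l, r) \<in> J. l < r) \<and>
        {a \<in> {1/2..2/3}. enat k \<le> kappa a} = (\<Union>(l, r) \<in> J. {l..r}) \<and>
        (\<forall>(l, r) \<in> J.
           (\<forall>j \<in> {1..k}. strict_antimono_on {l..r} (\<lambda>a. orb a j) \<and>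
                           continuous_on {l..r} (\<lambda>a. orb a j)) \<and>
           (\<forall>j \<in> {1..k-1}. \<forall>a \<in> {l..r}. \<forall>b \<in> {l..r}. delta a j = delta b j)))
     \<and>
     (let P = {(a'', a'). 1/2 \<le> a'' \<and> a'' < a' \<and> a' \<le> 2/3 \<and>
                  (\<forall>a \<in> {a''..a'}. enat k \<le> kappa a) \<and>
                  orb a'' k = 1 \<and> orb a' k = cI a'}
      in {a \<in> {1/2..2/3}. kappa a = enat k} = (\<Union>(a'', a') \<in> P. {a''<..<a'}) \<and>
         (\<forall>p \<in> P. \<forall>q \<in> P. p \<noteq> q \<longrightarrow>
             {fst p<..<snd p} \<inter> {fst q<..<snd q} = {}))"
proof -
  have k: "0 < k" using assms by simp
  define S where "S = {s. length s = k \<and> cell s \<noteq> {}}"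
  define J where "J = (\<lambda>s. (Inf (cell s), Sup (cell s))) ` S"
  have "finite J"
    using finite_lists_length_eq[of "UNIV :: bool set" k] by (simp add: J_def S_def)
  moreover have "\<forall>(l, r) \<in> J. l < r" using Inf_cell_less_Sup by (auto simp: J_def S_def)
  moreover have "(\<Union>(l, r) \<in> J. {l..r}) = (\<Union>s\<in>S. cell s)"
    by (simp add: J_def S_def atLeastAtMost_Inf_Sup_cell)
  then have "{a \<in> {1/2..2/3}. enat k \<le> kappa a} = (\<Union>(l, r) \<in> J. {l..r})"
    unfolding kappa_ge_eq_Union_cells S_def by blast
  moreover have "\<forall>(l, r) \<in> J.
           (\<forall>j \<in> {1..k}. strict_antimono_on {l..r} (\<lambda>a. orb a j) \<and>
                           continuous_on {l..r} (\<lambda>a. orb a j)) \<and>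
           (\<forall>j \<in> {1..k-1}. \<forall>a \<in> {l..r}. \<forall>b \<in> {l..r}. delta a j = delta b j)"
    using strict_antimono_on_cell_orb continuous_on_cell_orb delta_on_cell
    by (auto simp: J_def S_def atLeastAtMost_Inf_Sup_cell)
  moreover have "{a \<in> {1/2..2/3}. kappa a = enat k} = (\<Union>(x, y) \<in> hole_intervals k. {x<..<y})"
    using kappa_eq_in_hole_interval[OF k] kappa_eq_on_hole_interval[OF k] by fast
  moreover have "\<forall>p \<in> hole_intervals k. \<forall>q \<in> hole_intervals k. p \<noteq> q \<longrightarrow>
             {fst p<..<snd p} \<inter> {fst q<..<snd q} = {}"
    using hole_intervals_disjoint[OF k] by fastforce
  ultimately show ?thesis unfolding Let_def hole_intervals_def[symmetric] by blast
qed

end
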